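(* Let $X$ be a proper, connected and locally connected metric space, and let $\bar X$ be its Freudenthal compactification. The following are equivalent: (1) $\bar X$ is a coarse compactification of $X$; (2) for each $m>0$ and each bounded subset $K\subset X$ there is a bounded subset $L\supset K$ of $X$ such that for every $x\in X\setminus L$ the ball $B(x,m)$ is contained in a single connected component of $X\setminus K$.
   Context: A metric space is proper if closed balls are compact. A function $g:X\to\mathbb R$ is slowly oscillating if for all $r,\epsilon>0$ there is a bounded $K\subset X$ such that $x,y\in X\setminus K$ and $d(x,y)<r$ imply $|g(x)-g(y)|<\epsilon$. A coarse compactification of a proper metric space $X$ is a compactification $\bar X$ of $X$ such that every continuous $f:\bar X\to\mathbb R$ restricts to a slowly oscillating function on $X$ (equivalently, $\bar X$ is dominated by the Higson compactification of $X$, the compactification induced by all continuous slowly oscillating functions $X\to[0,1]$). The Freudenthal compactification of $X$ is $X\cup \mathrm{Ends}(X)$, where a Freudenthal end is a decreasing sequence $\{U_i\}_{i\ge1}$ with $U_i$ a component of $X\setminus K_i$, for an exhaustion of $X$ by compact sets $K_i$ with $K_i\subset\operatorname{int}(K_{i+1})$; the topology has as a basis the open subsets of $X$ with compact closure together with the sets consisting of a component $U$ of some $X\setminus K_i$ union all ends containing $U$. Its corona $\bar X\setminus X$ is zero-dimensional. *)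

theory Defs
  imports "HOL-Analysis.Analysis"
begin

text \<open>The metric space X is the whole type 'a (of class metric_space).\<close>

definition proper_metric :: "'a::metric_space itself \<Rightarrow> bool" where
  "proper_metric _ \<longleftrightarrow> (\<forall>(x::'a) r. compact (cball x r))"

definition slowly_oscillating :: "('a::metric_space \<Rightarrow> real) \<Rightarrow> bool" where
  "slowly_oscillating g \<longleftrightarrow>
     (\<forall>r>0. \<forall>\<epsilon>>0. \<exists>K. bounded K \<and>
        (\<forall>x y. x \<notin> K \<longrightarrow> y \<notin> K \<longrightarrow> dist x y < r \<longrightarrow> \<bar>g x - g y\<bar> < \<epsilon>))"

definition compactification :: "'b topology \<Rightarrow> ('a::metric_space \<Rightarrow> 'b) \<Rightarrow> bool" where
  "compactification T j \<longleftrightarrow>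
     compact_space T \<and> Hausdorff_space T \<and> embedding_map euclidean T j \<and>
     T closure_of (range j) = topspace T"

definition coarse_compactification :: "'b topology \<Rightarrow> ('a::metric_space \<Rightarrow> 'b) \<Rightarrow> bool" where
  "coarse_compactification T j \<longleftrightarrow>
     compactification T j \<and>
     (\<forall>f. continuous_map T euclideanreal f \<longrightarrow> slowly_oscillating (f \<circ> j))"

definition exhaustion :: "(nat \<Rightarrow> 'a::metric_space set) \<Rightarrow> bool" where
  "exhaustion K \<longleftrightarrow> (\<forall>i. compact (K i) \<and> K i \<subseteq> interior (K (Suc i))) \<and> (\<Union>i. K i) = UNIV"

definition freud_ends :: "(nat \<Rightarrow> 'a::metric_space set) \<Rightarrow> (nat \<Rightarrow> 'a set) set" where
  "freud_ends K = {e. \<forall>i. e i \<in> components (- K i) \<and> e (Suc i) \<subseteq> e i}"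

definition freud_basis :: "(nat \<Rightarrow> 'a::metric_space set) \<Rightarrow> ('a + (nat \<Rightarrow> 'a set)) set set" where
  "freud_basis K =
     {Inl ` V | V. open V \<and> compact (closure V)} \<union>
     {Inl ` U \<union> Inr ` {e \<in> freud_ends K. \<exists>j. e j \<subseteq> U} | U i. U \<in> components (- K i)}"

definition freudenthal :: "(nat \<Rightarrow> 'a::metric_space set) \<Rightarrow> ('a + (nat \<Rightarrow> 'a set)) topology" where
  "freudenthal K = topology_generated_by (freud_basis K)"

end

theory Submission
  imports Defs
begin

text \<open>The basic neighbourhoods of an end \<open>e\<close> are the sets \<open>with_ends (e J)\<close>: the component \<open>e J\<close>
  of \<open>X - K J\<close> together with the ends running into it. The Freudenthal space is a compact Hausdorff
  space by a Koenig argument, using that only finitely many components of \<open>X - K i\<close> leave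
  \<open>K (i + 1)\<close>.

  (2) \<open>\<Longrightarrow>\<close> (1): for continuous \<open>f\<close>, compactness yields finitely many ends whose neighbourhoods, on
  each of which \<open>f\<close> varies by less than \<open>\<epsilon>/2\<close>, cover all of \<open>X\<close> outside some \<open>K N\<close>; by (2),
  far out an \<open>r\<close>-ball never leaves such a component.

  (1) \<open>\<Longrightarrow>\<close> (2): for \<open>B \<subseteq> K i\<close> and each of the finitely many components \<open>U\<close> of \<open>X - K i\<close>
  leaving \<open>K (i + 1)\<close>, the indicator of \<open>U\<close>, damped by an Urysohn function vanishing on \<open>K i\<close>,
  extends continuously to the ends and is therefore slowly oscillating; so far out an
  \<open>m\<close>-ball around a point of \<open>U\<close> stays inside \<open>U\<close>.\<close>

lemma continuous_map_real_iff:
  "continuous_map X euclideanreal f \<longleftrightarrow>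
     (\<forall>p\<in>topspace X. \<forall>\<epsilon>>0. \<exists>W. openin X W \<and> p \<in> W \<and> (\<forall>q\<in>W. \<bar>f q - f p\<bar> < \<epsilon>))"
  using Met_TC.continuous_map_to_metric[of X f] by (simp add: dist_real_def abs_minus_commute)

lemma open_components_locally_connected_space:
  fixes S :: "'a::topological_space set"
  assumes "locally_connected_space (euclidean :: 'a topology)"
    and "open S" "C \<in> components S"
  shows "open C"
proof -
  obtain x where x: "x \<in> S" "C = connected_component_set S x"
    using assms(3) componentsE by blast
  have "open (connected_component_of_set (subtopology euclidean S) x)"
    using assms(1)[unfolded locally_connected_space_eq_open_connected_component_of,
        rule_format, of S x]
      assms(2) x(1) by simp
  moreover have "connected_component_of_set (subtopology euclidean S) x = C"
    by (auto simp: x connected_component_of_def connectedin_subtopology connected_component_def)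
  ultimately show ?thesis
    by simp
qed

lemma Urysohn_metric:
  fixes S T :: "'a::metric_space set"
  assumes "closed S" "closed T" "S \<inter> T = {}"
  obtains g :: "'a \<Rightarrow> real" where "continuous_on UNIV g"
    "\<And>x. x \<in> S \<Longrightarrow> g x = 0" "\<And>x. x \<in> T \<Longrightarrow> g x = 1"
proof -
  have "normal_space (euclidean :: 'a topology)"
    by (simp add: metrizable_imp_normal_space metrizable_space_euclidean)
  then obtain g where "continuous_map euclidean (top_of_set {0..1::real}) g" "g ` S \<subseteq> {0}" "g ` T
    \<subseteq> {1}"
    using Urysohn_lemma[of euclidean S T 0 1] assms by (auto simp: disjnt_def)
  moreover have "continuous_on UNIV g"
    using continuous_map_into_fulltopology[OF calculation(1)] by simp
  ultimately show ?thesis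
    using that[of g] by (simp add: image_subset_iff)
qed

lemma compact_space_finite_subcover_image:
  assumes "compact_space X" "\<And>i. i \<in> I \<Longrightarrow> openin X (W i)" "topspace X \<subseteq> (\<Union>i\<in>I. W i)"
  obtains C where "C \<subseteq> I" "finite C" "topspace X \<subseteq> (\<Union>i\<in>C. W i)"
proof -
  have "\<forall>U\<in>W ` I. openin X U"
    using assms(2) by blast
  then obtain F where F: "finite F" "F \<subseteq> W ` I" "topspace X \<subseteq> \<Union>F"
    using assms(1,3) unfolding compact_space_alt by meson
  then obtain C where "C \<subseteq> I" "finite C" "F = W ` C"
    using finite_subset_image[OF F(1,2)] by blast
  then show ?thesis
    using that F(3) by blast
qed

lemma bounded_margin:
  fixes L :: "'a::metric_space set"
  assumes "bounded L"
  obtains L' where "bounded L'" "L \<subseteq> L'" "\<And>x y. x \<notin> L' \<Longrightarrow> dist x y < m \<Longrightarrow> y \<notin> L"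
proof -
  obtain c R where R: "L \<subseteq> cball c R"
    using assms bounded_subset_cball by blast
  show ?thesis
  proof (rule that[of "cball c (R + \<bar>m\<bar>)"])
    show "L \<subseteq> cball c (R + \<bar>m\<bar>)"
      using R by auto
    fix x y assume "x \<notin> cball c (R + \<bar>m\<bar>)" "dist x y < m"
    moreover have "dist c x \<le> dist c y + dist x y"
      using dist_triangle[of c x y] by (simp add: dist_commute)
    ultimately show "y \<notin> L"
      using R by force
  qed simp
qed

lemma continuous_on_cutoff_open:
  assumes "open U" "continuous_on UNIV g" "\<And>x. x \<in> frontier U \<Longrightarrow> g x = 0"
  shows "continuous_on UNIV (\<lambda>x. if x \<in> U then g x else 0)"
proof -
  have "continuous_on (closure U \<union> - U) (\<lambda>x. if x \<in> U then g x else 0)"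
  proof (rule continuous_on_cases)
    show "\<forall>x. x \<in> closure U \<and> x \<notin> U \<or> x \<in> - U \<and> x \<in> U \<longrightarrow> g x = 0"
      using assms(1,3) by (auto simp: frontier_def interior_open)
  qed (use assms(1,2) in \<open>auto intro: continuous_on_subset\<close>)
  moreover have "closure U \<union> - U = UNIV"
    using closure_subset by blast
  ultimately show ?thesis
    by simp
qed

lemma closure_component_Int_subset:
  assumes "C \<in> components S"
  shows "closure C \<inter> S \<subseteq> C"
proof -
  obtain F where "closed F" "C = S \<inter> F"
    using closedin_component[OF assms] closedin_closed by metis
  then show ?thesis
    using closure_minimal[of C F] by blast
qed

lemma component_Compl_closure_meets:
  fixes A :: "'a::topological_space set"
  assumes "connected (UNIV :: 'a set)" "locally_connected_space (euclidean :: 'a topology)"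
    and "closed A" "A \<noteq> {}" "C \<in> components (- A)"
  shows "closure C \<inter> A \<noteq> {}"
proof
  assume "closure C \<inter> A = {}"
  then have "closed C"
    using closure_component_Int_subset[OF assms(5)] closure_subset_eq by blast
  moreover have "open C"
    using open_components_locally_connected_space assms(2,3,5) by blast
  moreover have "C \<noteq> {}" "C \<noteq> UNIV"
    using in_components_nonempty[OF assms(5)] in_components_subset[OF assms(5)] assms(4) by auto
  ultimately show False
    using connectedD[OF assms(1), of C "- C"] by auto
qed

text \<open>A component of \<open>- A\<close> not inside \<open>B\<close> meets the compact set \<open>frontier B\<close>, which is covered
  by the disjoint open components of \<open>- A\<close>.\<close>
lemma finite_components_Compl_not_subset:
  fixes A B :: "'a::t2_space set"
  assumes "connected (UNIV :: 'a set)" "locally_connected_space (euclidean :: 'a topology)"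
    and "compact A" "compact B" "A \<subseteq> interior B"
  shows "finite {C \<in> components (- A). \<not> C \<subseteq> B}"
proof (cases "A = {}")
  case True
  then show ?thesis
    using assms(1) components_eq_sing_iff[of "UNIV :: 'a set"] by simp
next
  case False
  have "closed A"
    using assms(3) by (rule compact_imp_closed)
  have meets_frontier: "C \<inter> frontier B \<noteq> {}" if C: "C \<in> components (- A)" "\<not> C \<subseteq> B" for C
  proof -
    have "closure C \<inter> interior B \<noteq> {}"
      using component_Compl_closure_meets[OF assms(1,2) \<open>closed A\<close> False C(1)] assms(5) by blast
    then have "C \<inter> B \<noteq> {}"
      using open_Int_closure_eq_empty[of "interior B" C] interior_subset[of B] by blast
    then show ?thesis
      using connected_Int_frontier[OF in_components_connected[OF C(1)]] C(2) by blast
  qed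
  have "compact (frontier B)"
    using compact_Int_closed[OF assms(4) frontier_closed[of B]]
      frontier_subset_closed[OF compact_imp_closed[OF assms(4)]] by (simp add: Int_absorb1)
  moreover have "frontier B \<subseteq> \<Union>(components (- A))"
    using assms(5) by (auto simp: frontier_def)
  moreover have "\<forall>C\<in>components (- A). open C"
    using open_components_locally_connected_space[OF assms(2)] \<open>closed A\<close> by blast
  ultimately obtain F where F: "F \<subseteq> components (- A)" "finite F" "frontier B \<subseteq> \<Union>F"
    by (metis compactE)
  have "{C \<in> components (- A). \<not> C \<subseteq> B} \<subseteq> F"
  proof
    fix C assume "C \<in> {C \<in> components (- A). \<not> C \<subseteq> B}"
    then have C: "C \<in> components (- A)" "\<not> C \<subseteq> B" by auto
    then obtain z C' where "z \<in> C" "z \<in> C'" "C' \<in> F"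
      using meets_frontier F(3) by blast
    then show "C \<in> F"
      using components_eq[OF C(1)] F(1) by blast
  qed
  then show ?thesis
    using F(2) finite_subset by blast
qed

definition finitely_coverable :: "'b set set \<Rightarrow> 'b set \<Rightarrow> bool" where
  "finitely_coverable \<U> W \<longleftrightarrow> (\<exists>F. finite F \<and> F \<subseteq> \<U> \<and> W \<subseteq> \<Union>F)"

lemma finitely_coverable_subset:
  "finitely_coverable \<U> A \<Longrightarrow> B \<subseteq> A \<Longrightarrow> finitely_coverable \<U> B"
  unfolding finitely_coverable_def by blast

lemma finitely_coverable_Un:
  "finitely_coverable \<U> A \<Longrightarrow> finitely_coverable \<U> B \<Longrightarrow> finitely_coverable \<U> (A \<union> B)"
proof -
  assume "finitely_coverable \<U> A" "finitely_coverable \<U> B"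
  then obtain FA FB where "finite FA" "FA \<subseteq> \<U>" "A \<subseteq> \<Union>FA" "finite FB" "FB \<subseteq> \<U>" "B \<subseteq> \<Union>FB"
    unfolding finitely_coverable_def by blast
  then show ?thesis
    unfolding finitely_coverable_def by (intro exI[of _ "FA \<union> FB"]) auto
qed

lemma finitely_coverable_UN:
  assumes "finite I" "\<And>i. i \<in> I \<Longrightarrow> finitely_coverable \<U> (A i)"
  shows "finitely_coverable \<U> (\<Union>i\<in>I. A i)"
  using assms
proof (induction I rule: finite_induct)
  case empty
  then show ?case
    unfolding finitely_coverable_def by auto
next
  case (insert i I)
  then show ?case
    using finitely_coverable_Un[of \<U> "A i" "\<Union>i\<in>I. A i"] by simp
qed

locale proper_exhaustion =
  fixes K :: "nat \<Rightarrow> 'a::metric_space set"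
  assumes proper: "proper_metric TYPE('a)"
    and connected_UNIV: "connected (UNIV :: 'a set)"
    and locally_connected: "locally_connected_space (euclidean :: 'a topology)"
    and exhaustion: "exhaustion K"
begin

lemma compact_closure_bounded: "bounded (S :: 'a set) \<Longrightarrow> compact (closure S)"
proof -
  assume "bounded S"
  then obtain x r where "closure S \<subseteq> cball x r"
    using bounded_closure bounded_subset_cball by blast
  then have "cball x r \<inter> closure S = closure S"
    by blast
  moreover have "compact (cball x r)"
    using proper unfolding proper_metric_def by blast
  ultimately show ?thesis
    using compact_Int_closed[of "cball x r" "closure S"] by (simp only: closed_closure)
qed

lemma compact_K: "compact (K i)"
  and K_subset_interior: "K i \<subseteq> interior (K (Suc i))"
  and UN_K: "(\<Union>i. K i) = UNIV"
  using exhaustion unfolding exhaustion_def by blast+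

lemma closed_K: "closed (K i)"
  by (simp add: compact_K compact_imp_closed)

lemma bounded_K: "bounded (K i)"
  by (simp add: compact_K compact_imp_bounded)

lemma K_mono: "i \<le> j \<Longrightarrow> K i \<subseteq> K j"
  by (rule lift_Suc_mono_le[of K]) (use K_subset_interior interior_subset in blast)

lemma UN_interior_K: "(\<Union>i. interior (K i)) = UNIV"
proof -
  have "x \<in> (\<Union>i. interior (K i))" for x
  proof -
    obtain i where "x \<in> K i"
      using UN_K by blast
    then show ?thesis
      using K_subset_interior by blast
  qed
  then show ?thesis
    by blast
qed

lemma open_components_Compl_K: "C \<in> components (- K i) \<Longrightarrow> open C"
  by (rule open_components_locally_connected_space[OF locally_connected])
    (simp_all add: closed_K open_Compl)

lemma frontier_component_Compl_K: "C \<in> components (- K i) \<Longrightarrow> frontier C \<subseteq> K i"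
  using closure_component_Int_subset open_components_Compl_K
  by (fastforce simp: frontier_def interior_open)

lemma finite_components_Compl_K_escaping: "finite {C \<in> components (- K i). \<not> C \<subseteq> K (Suc i)}"
  by (rule finite_components_Compl_not_subset[OF connected_UNIV locally_connected])
    (simp_all add: compact_K K_subset_interior)

lemma UN_K_subset_Max: "finite I \<Longrightarrow> (\<Union>i\<in>I. K i) \<subseteq> K (Max (insert 0 I))"
  using K_mono by (simp add: UN_least)

lemma compact_subset_K:
  assumes "compact (S :: 'a set)" shows "\<exists>i. S \<subseteq> K i"
proof -
  obtain I where I: "finite I" "S \<subseteq> (\<Union>i\<in>I. interior (K i))"
    by (rule compactE_image[OF assms, of UNIV "\<lambda>i. interior (K i)"]) (use UN_interior_K in auto)
  then have "S \<subseteq> (\<Union>i\<in>I. K i)"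
    using interior_subset by blast
  then show ?thesis
    using UN_K_subset_Max[OF I(1)] by blast
qed

lemma bounded_subset_K: "bounded (S :: 'a set) \<Longrightarrow> \<exists>i. S \<subseteq> K i"
  using compact_subset_K[OF compact_closure_bounded] closure_subset by (meson order_trans)

abbreviation T where "T \<equiv> freudenthal K"
abbreviation E where "E \<equiv> freud_ends K"

definition with_ends :: "'a set \<Rightarrow> ('a + (nat \<Rightarrow> 'a set)) set" where
  "with_ends U = Inl ` U \<union> Inr ` {e \<in> E. \<exists>j. e j \<subseteq> U}"

lemma Inl_in_with_ends [simp]: "Inl x \<in> with_ends U \<longleftrightarrow> x \<in> U"
  unfolding with_ends_def by auto

lemma end_in_components: "e \<in> E \<Longrightarrow> e i \<in> components (- K i)"
  unfolding freud_ends_def by blast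

lemma end_antimono: "e \<in> E \<Longrightarrow> i \<le> j \<Longrightarrow> e j \<subseteq> e i"
  unfolding freud_ends_def using lift_Suc_antimono_le[of e] by blast

lemma end_nonempty: "e \<in> E \<Longrightarrow> e i \<noteq> {}"
  using end_in_components in_components_nonempty by blast

lemma end_eq_component:
  assumes "e \<in> E" "U \<in> components (- K i)" "e j \<subseteq> U"
  shows "e i = U"
proof -
  have "e (max i j) \<subseteq> e i \<inter> U"
    using end_antimono[OF assms(1), of i "max i j"] end_antimono[OF assms(1), of j "max i j"]
      assms(3)
    by auto
  then show ?thesis
    using end_nonempty[OF assms(1)] components_eq[OF end_in_components[OF assms(1)] assms(2)]
    by blast
qed

lemma Inr_in_with_ends_component:
  assumes "U \<in> components (- K i)"
  shows "Inr e \<in> with_ends U \<longleftrightarrow> e \<in> E \<and> e i = U"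
  using end_eq_component[OF _ assms] unfolding with_ends_def by blast

lemma Inr_in_with_ends_end: "e \<in> E \<Longrightarrow> Inr e \<in> with_ends (e i)"
  unfolding with_ends_def by blast

lemma with_ends_end_antimono: "e \<in> E \<Longrightarrow> i \<le> j \<Longrightarrow> with_ends (e j) \<subseteq> with_ends (e i)"
  unfolding with_ends_def using end_antimono by blast

lemma end_agree_below:
  assumes "e \<in> E" "Inr e' \<in> with_ends (e j)" "i \<le> j"
  shows "e' i = e i"
proof -
  have "e' \<in> E" "e' j = e j"
    using assms(2) Inr_in_with_ends_component[OF end_in_components[OF assms(1)]] by auto
  then have "e' i \<inter> e i \<noteq> {}"
    using end_antimono[OF \<open>e' \<in> E\<close> assms(3)] end_antimono[OF assms(1,3)]
      end_nonempty[OF assms(1), of j]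
    by auto
  then show ?thesis
    using components_eq[OF end_in_components[OF \<open>e' \<in> E\<close>] end_in_components[OF assms(1)]] by blast
qed

lemma freud_basis_cases:
  assumes "s \<in> freud_basis K"
  obtains V where "s = Inl ` V" "open V"
  | U i where "s = with_ends U" "U \<in> components (- K i)"
  using assms that unfolding freud_basis_def with_ends_def by auto

lemma Inl_image_in_freud_basis: "open V \<Longrightarrow> bounded V \<Longrightarrow> Inl ` V \<in> freud_basis K"
  unfolding freud_basis_def using compact_closure_bounded by blast

lemma with_ends_in_freud_basis:
  assumes "U \<in> components (- K i)" shows "with_ends U \<in> freud_basis K"
  unfolding freud_basis_def with_ends_def using assms
  by (intro UnI2 CollectI exI[of _ U] exI[of _ i]) simp

lemma topspace_freudenthal: "topspace T = range Inl \<union> Inr ` E"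
proof -
  have "Inl x \<in> \<Union>(freud_basis K)" for x
    using Inl_image_in_freud_basis[of "ball x 1"] by (intro UnionI[of "Inl ` ball x 1"]) auto
  moreover have "Inr e \<in> \<Union>(freud_basis K)" if "e \<in> E" for e
    using with_ends_in_freud_basis[OF end_in_components[OF that]] Inr_in_with_ends_end[OF that]
    by blast
  moreover have "\<Union>(freud_basis K) \<subseteq> range Inl \<union> Inr ` E"
    unfolding freud_basis_def by auto
  ultimately have "\<Union>(freud_basis K) = range Inl \<union> Inr ` E"
    by (intro equalityI) auto
  then show ?thesis
    unfolding freudenthal_def by simp
qed

lemma openin_with_ends: "U \<in> components (- K i) \<Longrightarrow> openin T (with_ends U)"
  unfolding freudenthal_def by (rule topology_generated_by_Basis) (rule with_ends_in_freud_basis)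

lemma openin_Inl_image:
  assumes "open V" shows "openin T (Inl ` V)"
proof -
  have "openin T (Inl ` (V \<inter> ball x 1))" for x
    unfolding freudenthal_def
    by (rule topology_generated_by_Basis, rule Inl_image_in_freud_basis)
      (simp_all add: assms open_Int bounded_Int)
  moreover have "Inl ` V = (\<Union>x\<in>V. Inl ` (V \<inter> ball x 1))"
    by auto
  ultimately show ?thesis
    by (metis (no_types, lifting) imageE openin_Union)
qed

lemma open_vimage_Inl: "openin T W \<Longrightarrow> open (Inl -` W)"
  unfolding freudenthal_def openin_topology_generated_by_iff
proof (induction rule: generate_topology_on.induct)
  case (UN F)
  have "Inl -` \<Union>F = (\<Union>W\<in>F. Inl -` W)"
    by auto
  then show ?case
    using UN.IH by (simp add: open_UN)
next
  case (Basis s)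
  then show ?case
  proof (cases rule: freud_basis_cases)
    case (2 U i)
    have "Inl -` with_ends U = U"
      by auto
    then show ?thesis
      using 2 open_components_Compl_K by simp
  qed (simp add: inj_vimage_image_eq)
qed (simp_all add: open_Int)

lemma openin_end_nbhd: "openin T W \<Longrightarrow> Inr e \<in> W \<Longrightarrow> e \<in> E \<Longrightarrow> \<exists>J. with_ends (e J) \<subseteq> W"
  unfolding freudenthal_def openin_topology_generated_by_iff
proof (induction rule: generate_topology_on.induct)
  case (Int a b)
  from Int.prems have "Inr e \<in> a" "Inr e \<in> b"
    by auto
  then obtain J1 J2 where "with_ends (e J1) \<subseteq> a" "with_ends (e J2) \<subseteq> b"
    using Int.IH Int.prems(2) by meson
  then show ?case
    using with_ends_end_antimono[OF Int.prems(2), of J1 "max J1 J2"]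
      with_ends_end_antimono[OF Int.prems(2), of J2 "max J1 J2"]
    by (intro exI[of _ "max J1 J2"]) auto
next
  case (UN F)
  then obtain k where "k \<in> F" "Inr e \<in> k"
    by blast
  then obtain J where "with_ends (e J) \<subseteq> k"
    using UN.IH UN.prems(2) by meson
  then show ?case
    using \<open>k \<in> F\<close> by (intro exI[of _ J]) auto
next
  case (Basis s)
  then show ?case
  proof (cases rule: freud_basis_cases)
    case (2 U i)
    then have "e i = U"
      using Basis.prems Inr_in_with_ends_component by blast
    then show ?thesis
      using 2(1) by (intro exI[of _ i]) simp
  qed (use Basis.prems in auto)
qed simp

lemma continuous_map_Inl: "continuous_map euclidean T Inl"
  unfolding continuous_map_def topspace_freudenthal using open_vimage_Inl by (auto simp: vimage_def)

lemma embedding_map_Inl: "embedding_map euclidean T Inl"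
  unfolding embedding_map_def
proof (rule bijective_open_imp_homeomorphic_map)
  show "continuous_map euclidean (subtopology T (Inl ` topspace euclidean)) Inl"
    by (rule continuous_map_into_subtopology[OF continuous_map_Inl]) auto
  show "open_map euclidean (subtopology T (Inl ` topspace euclidean)) Inl"
    unfolding open_map_def
  proof (intro allI impI)
    fix U :: "'a set" assume "openin euclidean U"
    then have "openin T (Inl ` U)"
      using openin_Inl_image by simp
    then have "openin (subtopology T (Inl ` topspace euclidean))
      (Inl ` topspace euclidean \<inter> Inl ` U)"
      by (rule openin_subtopology_Int2)
    moreover have "Inl ` topspace euclidean \<inter> Inl ` U = (Inl ` U :: ('a + (nat \<Rightarrow> 'a set)) set)"
      by auto
    ultimately show "openin (subtopology T (Inl ` topspace euclidean)) (Inl ` U)"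
      by simp
  qed
qed (auto simp: topspace_freudenthal)

lemma dense_range_Inl: "T closure_of (range Inl) = topspace T"
proof (intro equalityI subsetI)
  fix p assume p: "p \<in> topspace T"
  have "\<exists>x. Inl x \<in> W" if W: "openin T W" "p \<in> W" for W
  proof (cases p)
    case (Inl x)
    then show ?thesis
      using W(2) by blast
  next
    case (Inr e)
    then have "e \<in> E"
      using p topspace_freudenthal by auto
    then obtain J where "with_ends (e J) \<subseteq> W"
      using openin_end_nbhd[OF W(1)] W(2) Inr by meson
    moreover obtain z where "z \<in> e J"
      using end_nonempty[OF \<open>e \<in> E\<close>] by blast
    ultimately show ?thesis
      by (intro exI[of _ z]) (simp add: subset_iff)
  qed
  then show "p \<in> T closure_of (range Inl)"
    unfolding in_closure_of using p by (meson rangeI)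
qed (rule closure_of_subset_topspace[THEN subsetD])

lemma disjnt_with_ends_components:
  assumes "U \<in> components (- K i)" "V \<in> components (- K i)" "U \<noteq> V"
  shows "disjnt (with_ends U) (with_ends V)"
proof -
  have "U \<inter> V = {}"
    using components_nonoverlap[OF assms(1,2)] assms(3) by blast
  have "p \<notin> with_ends V" if "p \<in> with_ends U" for p
  proof (cases p)
    case (Inl x)
    then show ?thesis
      using that \<open>U \<inter> V = {}\<close> by auto
  next
    case (Inr e)
    then show ?thesis
      using that Inr_in_with_ends_component[OF assms(1)] Inr_in_with_ends_component[OF assms(2)]
        assms(3)
      by auto
  qed
  then show ?thesis
    unfolding disjnt_def by blast
qed

lemma separate_point_end:
  assumes "e \<in> E"
  obtains U V where "openin T U" "openin T V" "Inl x \<in> U" "Inr e \<in> V" "disjnt U V"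
proof -
  obtain i where "x \<in> K i"
    using UN_K by blast
  then have x: "Inl x \<in> Inl ` interior (K (Suc i))"
    using K_subset_interior by blast
  have "e (Suc i) \<subseteq> - K (Suc i)"
    using in_components_subset[OF end_in_components[OF assms]] .
  then have "disjnt (Inl ` interior (K (Suc i))) (with_ends (e (Suc i)))"
    using interior_subset unfolding disjnt_def with_ends_def by auto
  then show ?thesis
    using that[OF openin_Inl_image[OF open_interior]
        openin_with_ends[OF end_in_components[OF assms]] x
        Inr_in_with_ends_end[OF assms]] by blast
qed

lemma separate_points_Inl:
  assumes "x \<noteq> y"
  obtains U V where "openin T U" "openin T V" "Inl x \<in> U" "Inl y \<in> V" "disjnt U V"
proof (rule that[of "Inl ` ball x (dist x y / 2)" "Inl ` ball y (dist x y / 2)"])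
  have "ball x (dist x y / 2) \<inter> ball y (dist x y / 2) = {}"
    by (intro disjoint_ballI) simp
  then show "disjnt (Inl ` ball x (dist x y / 2)) (Inl ` ball y (dist x y / 2))"
    unfolding disjnt_def by blast
qed (use assms in \<open>simp_all add: openin_Inl_image\<close>)

lemma separate_ends:
  assumes "e \<in> E" "e' \<in> E" "e \<noteq> e'"
  obtains U V where "openin T U" "openin T V" "Inr e \<in> U" "Inr e' \<in> V" "disjnt U V"
proof -
  obtain i where "e i \<noteq> e' i"
    using assms(3) by blast
  moreover have U: "e i \<in> components (- K i)" and V: "e' i \<in> components (- K i)"
    using end_in_components assms(1,2) by blast+
  ultimately show ?thesis
    using that[OF openin_with_ends[OF U] openin_with_ends[OF V] Inr_in_with_ends_end[OF assms(1)]
        Inr_in_with_ends_end[OF assms(2)] disjnt_with_ends_components[OF U V]] by blast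
qed

lemma Hausdorff_space_freudenthal: "Hausdorff_space T"
  unfolding Hausdorff_space_def
proof (intro allI impI, elim conjE)
  fix p q assume p: "p \<in> topspace T" and q: "q \<in> topspace T" and "p \<noteq> q"
  show "\<exists>U V. openin T U \<and> openin T V \<and> p \<in> U \<and> q \<in> V \<and> disjnt U V"
  proof (cases p; cases q)
    fix x y assume xy: "p = Inl x" "q = Inl y"
    then have "x \<noteq> y"
      using \<open>p \<noteq> q\<close> by blast
    then obtain U V where "openin T U" "openin T V" "Inl x \<in> U" "Inl y \<in> V" "disjnt U V"
      by (rule separate_points_Inl)
    then show ?thesis
      using xy by blast
  next
    fix x e assume xe: "p = Inl x" "q = Inr e"
    then have "e \<in> E"
      using q topspace_freudenthal by auto
    then obtain U V where "openin T U" "openin T V" "Inl x \<in> U" "Inr e \<in> V" "disjnt U V"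
      by (rule separate_point_end)
    then show ?thesis
      using xe by blast
  next
    fix e x assume ex: "p = Inr e" "q = Inl x"
    then have "e \<in> E"
      using p topspace_freudenthal by auto
    then obtain U V where "openin T U" "openin T V" "Inl x \<in> U" "Inr e \<in> V" "disjnt U V"
      by (rule separate_point_end)
    then show ?thesis
      using ex disjnt_sym by blast
  next
    fix e e' assume ee: "p = Inr e" "q = Inr e'"
    then have "e \<in> E" "e' \<in> E" "e \<noteq> e'"
      using p q \<open>p \<noteq> q\<close> topspace_freudenthal by auto
    then obtain U V where "openin T U" "openin T V" "Inr e \<in> U" "Inr e' \<in> V" "disjnt U V"
      by (rule separate_ends)
    then show ?thesis
      using ee by blast
  qed
qed

lemma finitely_coverable_Inl_compact:
  assumes "\<forall>G\<in>\<U>. openin T G" "topspace T \<subseteq> \<Union>\<U>" "compact C"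
  shows "finitely_coverable \<U> (Inl ` C)"
proof -
  have "compactin T (Inl ` C)"
    using image_compactin[OF _ continuous_map_Inl] assms(3) by simp
  moreover have "Inl ` C \<subseteq> \<Union>\<U>"
    using assms(2) topspace_freudenthal by auto
  ultimately show ?thesis
    unfolding compactin_def finitely_coverable_def using assms(1) by meson
qed

lemma saturated_with_ends_subset:
  assumes saturated: "\<And>V. V \<in> components (- K j) \<Longrightarrow> V \<inter> U \<noteq> {} \<Longrightarrow> V \<subseteq> U"
  shows "Inl ` U \<union> Inr ` {e \<in> E. e j \<subseteq> U} \<subseteq>
     Inl ` K (Suc j) \<union> (\<Union>V \<in> {V \<in> components (- K j). V \<subseteq> U \<and> \<not> V \<subseteq> K (Suc j)}. with_ends V)"
    (is "_ \<subseteq> _ \<union> (\<Union>V \<in> ?F. with_ends V)")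
proof (intro subsetI)
  fix p assume "p \<in> Inl ` U \<union> Inr ` {e \<in> E. e j \<subseteq> U}"
  then consider x where "p = Inl x" "x \<in> U" | e where "p = Inr e" "e \<in> E" "e j \<subseteq> U"
    by blast
  then show "p \<in> Inl ` K (Suc j) \<union> (\<Union>V \<in> ?F. with_ends V)"
  proof cases
    case 1
    show ?thesis
    proof (cases "x \<in> K (Suc j)")
      case False
      then have "x \<in> - K j"
        using K_mono[of j "Suc j"] by auto
      define V where "V = connected_component_set (- K j) x"
      have V: "V \<in> components (- K j)" "x \<in> V"
        using \<open>x \<in> - K j\<close> unfolding V_def by (auto intro: componentsI)
      then have "V \<in> ?F"
        using saturated[OF V(1)] 1(2) False by blast
      then show ?thesis
        using 1(1) V(2) by auto
    qed (use 1 in auto)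
  next
    case 2
    have "e (Suc j) \<subseteq> e j" "e (Suc j) \<subseteq> - K (Suc j)" "e (Suc j) \<noteq> {}"
      using end_antimono[OF 2(2)] in_components_subset[OF end_in_components[OF 2(2)]]
        end_nonempty[OF 2(2)]
      by auto
    then have "e j \<in> ?F"
      using end_in_components[OF 2(2)] 2(3) by blast
    then show ?thesis
      using 2(1) Inr_in_with_ends_end[OF 2(2)] by auto
  qed
qed

lemma not_finitely_coverable_component:
  assumes cover: "\<forall>G\<in>\<U>. openin T G" "topspace T \<subseteq> \<Union>\<U>"
    and saturated: "\<And>V. V \<in> components (- K j) \<Longrightarrow> V \<inter> U \<noteq> {} \<Longrightarrow> V \<subseteq> U"
    and not_coverable: "\<not> finitely_coverable \<U> (Inl ` U \<union> Inr ` {e \<in> E. e j \<subseteq> U})"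
  shows "\<exists>V\<in>components (- K j). V \<subseteq> U \<and> \<not> finitely_coverable \<U> (with_ends V)"
proof (rule ccontr)
  let ?F = "{V \<in> components (- K j). V \<subseteq> U \<and> \<not> V \<subseteq> K (Suc j)}"
  assume "\<not> ?thesis"
  moreover have "finite ?F"
    using finite_components_Compl_K_escaping by (rule finite_subset[rotated]) auto
  ultimately have "finitely_coverable \<U> (\<Union>V\<in>?F. with_ends V)"
    by (intro finitely_coverable_UN) auto
  moreover have "finitely_coverable \<U> (Inl ` K (Suc j))"
    using finitely_coverable_Inl_compact[OF cover compact_K] .
  ultimately have "finitely_coverable \<U> (Inl ` K (Suc j) \<union> (\<Union>V\<in>?F. with_ends V))"
    by (intro finitely_coverable_Un)
  then show False
    using not_coverable finitely_coverable_subset[OF _ saturated_with_ends_subset[OF saturated]]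
    by blast
qed

lemma with_ends_component_subset:
  assumes "V \<in> components (- K n)"
  shows "with_ends V \<subseteq> Inl ` V \<union> Inr ` {e \<in> E. e (Suc n) \<subseteq> V}"
proof
  fix p assume "p \<in> with_ends V"
  then show "p \<in> Inl ` V \<union> Inr ` {e \<in> E. e (Suc n) \<subseteq> V}"
  proof (cases p)
    case (Inr e)
    then have "e \<in> E" "e n = V"
      using \<open>p \<in> with_ends V\<close> Inr_in_with_ends_component[OF assms] by auto
    then show ?thesis
      using Inr end_antimono[of e n "Suc n"] by auto
  qed auto
qed

lemma not_finitely_coverable_subcomponent:
  assumes cover: "\<forall>G\<in>\<U>. openin T G" "topspace T \<subseteq> \<Union>\<U>"
    and V: "V \<in> components (- K n)" and not_coverable: "\<not> finitely_coverable \<U> (with_ends V)"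
  shows "\<exists>V'\<in>components (- K (Suc n)). V' \<subseteq> V \<and> \<not> finitely_coverable \<U> (with_ends V')"
proof (rule not_finitely_coverable_component[OF cover])
  show "V' \<subseteq> V" if "V' \<in> components (- K (Suc n))" "V' \<inter> V \<noteq> {}" for V'
  proof (rule components_maximal[OF V in_components_connected[OF that(1)]])
    show "V' \<subseteq> - K n"
      using in_components_subset[OF that(1)] K_mono[of n "Suc n"] by auto
  qed (use that(2) in auto)
  show "\<not> finitely_coverable \<U> (Inl ` V \<union> Inr ` {e \<in> E. e (Suc n) \<subseteq> V})"
    using not_coverable finitely_coverable_subset with_ends_component_subset[OF V] by blast
qed

text \<open>Koenig's lemma: a cover without finite subcover yields a nested sequence of components,
  i.e. an end, none of whose neighbourhoods is finitely covered.\<close>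
lemma compact_space_freudenthal: "compact_space T"
  unfolding compact_space_alt
proof (intro allI impI)
  fix \<U> assume "(\<forall>G\<in>\<U>. openin T G) \<and> topspace T \<subseteq> \<Union>\<U>"
  then have cover: "\<forall>G\<in>\<U>. openin T G" "topspace T \<subseteq> \<Union>\<U>"
    by auto
  define bad where "bad n V \<longleftrightarrow> V \<in> components (- K n) \<and> \<not> finitely_coverable \<U> (with_ends V)" for n V
  show "\<exists>F. finite F \<and> F \<subseteq> \<U> \<and> topspace T \<subseteq> \<Union>F"
  proof (rule ccontr)
    assume "\<not> ?thesis"
    moreover have "topspace T = Inl ` UNIV \<union> Inr ` {e \<in> E. e 0 \<subseteq> UNIV}"
      by (simp add: topspace_freudenthal)
    ultimately have "\<not> finitely_coverable \<U> (Inl ` UNIV \<union> Inr ` {e \<in> E. e 0 \<subseteq> UNIV})"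
      unfolding finitely_coverable_def by simp
    then have start: "\<exists>V. bad 0 V"
      using not_finitely_coverable_component[OF cover, of 0 UNIV] unfolding bad_def by auto
    have step: "\<exists>V'. bad (Suc n) V' \<and> V' \<subseteq> V" if "bad n V" for n V
      using not_finitely_coverable_subcomponent[OF cover] that unfolding bad_def by blast
    have "\<exists>e. \<forall>n. bad n (e n) \<and> e (Suc n) \<subseteq> e n"
      by (rule dependent_nat_choice[of bad "\<lambda>n V V'. V' \<subseteq> V", OF start step])
    then obtain e where e: "\<And>n. bad n (e n)" "\<And>n. e (Suc n) \<subseteq> e n"
      by blast
    then have "e \<in> E"
      unfolding freud_ends_def bad_def by simp
    then have "Inr e \<in> \<Union>\<U>"
      using cover(2) topspace_freudenthal by auto
    then obtain G where "G \<in> \<U>" "Inr e \<in> G"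
      by blast
    then obtain J where "with_ends (e J) \<subseteq> G"
      using openin_end_nbhd cover(1) \<open>e \<in> E\<close> by meson
    then have "finitely_coverable \<U> (with_ends (e J))"
      using \<open>G \<in> \<U>\<close> unfolding finitely_coverable_def by (intro exI[of _ "{G}"]) auto
    then show False
      using e(1) unfolding bad_def by blast
  qed
qed

lemma compactification_freudenthal: "compactification T Inl"
  unfolding compactification_def
  using compact_space_freudenthal Hausdorff_space_freudenthal embedding_map_Inl dense_range_Inl
  by blast

lemma continuous_map_end_nbhd:
  assumes "continuous_map T euclideanreal f" "e \<in> E" "\<epsilon> > 0"
  shows "\<exists>J. \<forall>q\<in>with_ends (e J). \<bar>f q - f (Inr e)\<bar> < \<epsilon>"
proof -
  have "Inr e \<in> topspace T"
    using assms(2) topspace_freudenthal by auto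
  then obtain W where "openin T W" "Inr e \<in> W" "\<forall>q\<in>W. \<bar>f q - f (Inr e)\<bar> < \<epsilon>"
    using assms(1,3) unfolding continuous_map_real_iff by meson
  moreover obtain J where "with_ends (e J) \<subseteq> W"
    using openin_end_nbhd[OF calculation(1,2) assms(2)] by blast
  ultimately show ?thesis
    by blast
qed

lemma continuous_map_freudenthalI:
  assumes cont: "continuous_on UNIV (f \<circ> Inl)"
    and ends: "\<And>e \<epsilon>. e \<in> E \<Longrightarrow> \<epsilon> > 0 \<Longrightarrow> \<exists>J. \<forall>q\<in>with_ends (e J). \<bar>f q - f (Inr e)\<bar> < \<epsilon>"
  shows "continuous_map T euclideanreal f"
  unfolding continuous_map_real_iff
proof (intro ballI allI impI)
  fix p and \<epsilon> :: real assume p: "p \<in> topspace T" and "\<epsilon> > 0"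
  show "\<exists>W. openin T W \<and> p \<in> W \<and> (\<forall>q\<in>W. \<bar>f q - f p\<bar> < \<epsilon>)"
  proof (cases p)
    case (Inl x)
    have "\<exists>d>0. \<forall>y. dist y x < d \<longrightarrow> \<bar>f (Inl y) - f (Inl x)\<bar> < \<epsilon>"
      using cont \<open>\<epsilon> > 0\<close> unfolding continuous_on_iff dist_real_def comp_def by blast
    then obtain d where "d > 0" "\<And>y. dist y x < d \<Longrightarrow> \<bar>f (Inl y) - f (Inl x)\<bar> < \<epsilon>"
      by blast
    then show ?thesis
      using Inl openin_Inl_image[of "ball x d"]
      by (intro exI[of _ "Inl ` ball x d"]) (auto simp: dist_commute)
  next
    case (Inr e)
    then have "e \<in> E"
      using p topspace_freudenthal by auto
    then obtain J where "\<forall>q\<in>with_ends (e J). \<bar>f q - f (Inr e)\<bar> < \<epsilon>"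
      using ends \<open>\<epsilon> > 0\<close> by blast
    then show ?thesis
      using Inr openin_with_ends[OF end_in_components[OF \<open>e \<in> E\<close>]] Inr_in_with_ends_end[OF \<open>e \<in> E\<close>]
      by (intro exI[of _ "with_ends (e J)"]) auto
  qed
qed

text \<open>On \<open>X\<close> the function is continuous because the frontier of \<open>U\<close> lies in \<open>K i\<close>, where \<open>g\<close>
  vanishes; near an end \<open>e\<close> it is constant on \<open>with_ends (e (Suc i))\<close>, as \<open>g = 1\<close> off \<open>K (Suc i)\<close>.\<close>
lemma continuous_map_component_cutoff:
  assumes U: "U \<in> components (- K i)"
    and g: "continuous_on UNIV g" "\<And>x. x \<in> K i \<Longrightarrow> g x = 0" "\<And>x. x \<notin> K (Suc i) \<Longrightarrow> g x = 1"
  shows "continuous_map T euclideanreal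
           (case_sum (\<lambda>x. if x \<in> U then g x else 0) (\<lambda>e. if e i = U then 1 else 0))"
    (is "continuous_map T euclideanreal ?f")
proof (rule continuous_map_freudenthalI)
  have "continuous_on UNIV (\<lambda>x. if x \<in> U then g x else 0)"
    using continuous_on_cutoff_open[OF open_components_Compl_K[OF U] g(1)]
      frontier_component_Compl_K[OF U] g(2)
    by blast
  then show "continuous_on UNIV (?f \<circ> Inl)"
    by (simp add: comp_def)
  show "\<exists>J. \<forall>q\<in>with_ends (e J). \<bar>?f q - ?f (Inr e)\<bar> < \<epsilon>" if e: "e \<in> E" "\<epsilon> > 0" for e \<epsilon>
  proof (intro exI[of _ "Suc i"] ballI)
    fix q assume q: "q \<in> with_ends (e (Suc i))"
    have "?f q = ?f (Inr e)"
    proof (cases q)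
      case (Inl y)
      then have "y \<in> e (Suc i)"
        using q by simp
      then have "y \<in> e i" "y \<notin> K (Suc i)"
        using end_antimono[OF e(1), of i "Suc i"]
          in_components_subset[OF end_in_components[OF e(1)]]
        by auto
      moreover have "y \<in> U \<longleftrightarrow> e i = U"
        using components_eq[OF end_in_components[OF e(1)] U] \<open>y \<in> e i\<close> by blast
      ultimately show ?thesis
        using Inl g(3) by simp
    next
      case (Inr e')
      then show ?thesis
        using end_agree_below[OF e(1), of e' "Suc i" i] q by simp
    qed
    then show "\<bar>?f q - ?f (Inr e)\<bar> < \<epsilon>"
      using e(2) by simp
  qed
qed

lemma coarse_compactification_imp_component_contains_balls:
  assumes coarse: "coarse_compactification T Inl" and "m > 0" and U: "U \<in> components (- K i)"
  shows "\<exists>L. bounded L \<and> (\<forall>x\<in>U. x \<notin> L \<longrightarrow> ball x m \<subseteq> U)"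
proof -
  obtain g :: "'a \<Rightarrow> real" where g: "continuous_on UNIV g" "\<And>x. x \<in> K i \<Longrightarrow> g x = 0"
    "\<And>x. x \<in> - interior (K (Suc i)) \<Longrightarrow> g x = 1"
    using Urysohn_metric[of "K i" "- interior (K (Suc i))"] closed_K K_subset_interior by blast
  have g1: "g x = 1" if "x \<notin> K (Suc i)" for x
    using g(3) interior_subset that by blast
  define f where "f = case_sum (\<lambda>x. if x \<in> U then g x else 0) (\<lambda>e. if e i = U then 1 else 0)"
  have "continuous_map T euclideanreal f"
    unfolding f_def using continuous_map_component_cutoff[OF U g(1,2) g1] .
  then have "slowly_oscillating (f \<circ> Inl)"
    using coarse unfolding coarse_compactification_def by blast
  then have "\<exists>L0. bounded L0 \<and>
      (\<forall>x y. x \<notin> L0 \<longrightarrow> y \<notin> L0 \<longrightarrow> dist x y < m \<longrightarrow> \<bar>f (Inl x) - f (Inl y)\<bar> < 1)"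
    unfolding slowly_oscillating_def using \<open>m > 0\<close> by simp
  then obtain L0 where "bounded L0"
    and L0: "\<And>x y. x \<notin> L0 \<Longrightarrow> y \<notin> L0 \<Longrightarrow> dist x y < m \<Longrightarrow> \<bar>f (Inl x) - f (Inl y)\<bar> < 1"
    by blast
  have "bounded (K (Suc i) \<union> L0)"
    using bounded_K \<open>bounded L0\<close> by simp
  then obtain L where L: "bounded L" "K (Suc i) \<union> L0 \<subseteq> L"
    "\<And>x y. x \<notin> L \<Longrightarrow> dist x y < m \<Longrightarrow> y \<notin> K (Suc i) \<union> L0"
    by (rule bounded_margin[where m = m]) (rule that)
  have "ball x m \<subseteq> U" if "x \<in> U" "x \<notin> L" for x
  proof
    fix y assume "y \<in> ball x m"
    then have "dist x y < m"
      by simp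
    then have "x \<notin> L0" "y \<notin> L0" "x \<notin> K (Suc i)" "y \<notin> K (Suc i)"
      using L(2,3) that(2) by auto
    then have "\<bar>f (Inl x) - f (Inl y)\<bar> < 1"
      using L0 \<open>dist x y < m\<close> by blast
    then show "y \<in> U"
      using that(1) g1 \<open>x \<notin> K (Suc i)\<close> \<open>y \<notin> K (Suc i)\<close> unfolding f_def by (auto split: if_splits)
  qed
  then show ?thesis
    using L(1) by blast
qed

lemma coarse_compactification_imp_balls_in_components:
  assumes coarse: "coarse_compactification T Inl"
  shows "\<forall>m>0. \<forall>B :: 'a set. bounded B \<longrightarrow>
           (\<exists>L. bounded L \<and> B \<subseteq> L \<and> (\<forall>x. x \<notin> L \<longrightarrow> (\<exists>C\<in>components (- B). ball x m \<subseteq> C)))"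
proof (intro allI impI)
  fix m :: real and B :: "'a set" assume "m > 0" "bounded B"
  obtain i where "B \<subseteq> K i"
    using bounded_subset_K[OF \<open>bounded B\<close>] by blast
  define F where "F = {U \<in> components (- K i). \<not> U \<subseteq> K (Suc i)}"
  have "\<forall>U\<in>F. \<exists>L. bounded L \<and> (\<forall>x\<in>U. x \<notin> L \<longrightarrow> ball x m \<subseteq> U)"
    using coarse_compactification_imp_component_contains_balls[OF coarse \<open>m > 0\<close>] unfolding F_def
    by blast
  then obtain L where L: "\<And>U. U \<in> F \<Longrightarrow> bounded (L U)"
    "\<And>U x. U \<in> F \<Longrightarrow> x \<in> U \<Longrightarrow> x \<notin> L U \<Longrightarrow> ball x m \<subseteq> U"
    by metis
  define L' where "L' = K (Suc i) \<union> (\<Union>U\<in>F. L U)"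
  have "bounded L'"
    using finite_components_Compl_K_escaping L(1) bounded_K unfolding L'_def F_def by auto
  moreover have "B \<subseteq> L'"
    using \<open>B \<subseteq> K i\<close> K_mono[of i "Suc i"] unfolding L'_def by auto
  moreover have "\<exists>C\<in>components (- B). ball x m \<subseteq> C" if "x \<notin> L'" for x
  proof -
    have "x \<notin> K (Suc i)" "x \<in> - K i"
      using that K_mono[of i "Suc i"] unfolding L'_def by auto
    define U where "U = connected_component_set (- K i) x"
    have "U \<in> components (- K i)" "x \<in> U"
      using \<open>x \<in> - K i\<close> unfolding U_def by (auto intro: componentsI)
    then have "U \<in> F"
      using \<open>x \<notin> K (Suc i)\<close> unfolding F_def by blast
    then have "ball x m \<subseteq> U"
      using L(2) \<open>x \<in> U\<close> that unfolding L'_def by blast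
    moreover have "U \<subseteq> connected_component_set (- B) x"
      unfolding U_def using \<open>B \<subseteq> K i\<close> by (intro connected_component_mono) blast
    moreover have "connected_component_set (- B) x \<in> components (- B)"
      using \<open>x \<in> - K i\<close> \<open>B \<subseteq> K i\<close> by (intro componentsI) blast
    ultimately show ?thesis
      by blast
  qed
  ultimately show "\<exists>L. bounded L \<and> B \<subseteq> L \<and> (\<forall>x. x \<notin> L \<longrightarrow> (\<exists>C\<in>components (- B). ball x m \<subseteq> C))"
    by blast
qed

lemma ends_cover_Compl_K:
  fixes J :: "(nat \<Rightarrow> 'a set) \<Rightarrow> nat"
  obtains Es N where "finite Es" "Es \<subseteq> E" "\<And>x. x \<notin> K N \<Longrightarrow> \<exists>e\<in>Es. x \<in> e (J e)"
proof -
  define W where "W = case_sum (\<lambda>n. Inl ` interior (K n)) (\<lambda>e. with_ends (e (J e)))"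
  have "openin T (W c)" if "c \<in> UNIV <+> E" for c
    using that unfolding W_def
    by (auto intro: openin_Inl_image[OF open_interior] openin_with_ends[OF end_in_components])
  moreover have "topspace T \<subseteq> (\<Union>c\<in>UNIV <+> E. W c)"
  proof
    fix p assume p: "p \<in> topspace T"
    show "p \<in> (\<Union>c\<in>UNIV <+> E. W c)"
    proof (cases p)
      case (Inl x)
      obtain n where "x \<in> interior (K n)"
        using UN_interior_K by blast
      then show ?thesis
        using Inl unfolding W_def by (intro UN_I[of "Inl n"]) auto
    next
      case (Inr e)
      then show ?thesis
        using p Inr_in_with_ends_end[of e "J e"] unfolding W_def topspace_freudenthal
        by (intro UN_I[of "Inr e"]) auto
    qed
  qed
  ultimately obtain C where C: "C \<subseteq> UNIV <+> E" "finite C" "topspace T \<subseteq> (\<Union>c\<in>C. W c)"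
    by (rule compact_space_finite_subcover_image[OF compact_space_freudenthal])
  define N where "N = Max (insert 0 (Inl -` C))"
  have "\<exists>e\<in>Inr -` C. x \<in> e (J e)" if "x \<notin> K N" for x
  proof -
    have "Inl x \<in> topspace T"
      by (simp add: topspace_freudenthal)
    then obtain c where "c \<in> C" "Inl x \<in> W c"
      using C(3) by blast
    moreover have "x \<notin> interior (K n)" if "Inl n \<in> C" for n
      using UN_K_subset_Max[of "Inl -` C"] C(2) \<open>x \<notin> K N\<close> interior_subset that
      unfolding N_def by (auto simp: finite_vimageI)
    ultimately show ?thesis
      unfolding W_def by (cases c) auto
  qed
  moreover have "finite (Inr -` C)" "Inr -` C \<subseteq> E"
    using C(1,2) by (auto simp: finite_vimageI)
  ultimately show ?thesis
    using that by blast
qed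

lemma balls_in_components_imp_slowly_oscillating:
  assumes balls: "\<forall>m>0. \<forall>B :: 'a set. bounded B \<longrightarrow>
            (\<exists>L. bounded L \<and> B \<subseteq> L \<and> (\<forall>x. x \<notin> L \<longrightarrow> (\<exists>C\<in>components (- B). ball x m \<subseteq> C)))"
    and f: "continuous_map T euclideanreal f"
  shows "slowly_oscillating (f \<circ> Inl)"
  unfolding slowly_oscillating_def
proof (intro allI impI)
  fix r \<epsilon> :: real assume "r > 0" "\<epsilon> > 0"
  have "\<forall>e\<in>E. \<exists>J. \<forall>q\<in>with_ends (e J). \<bar>f q - f (Inr e)\<bar> < \<epsilon> / 2"
    using continuous_map_end_nbhd[OF f _ half_gt_zero[OF \<open>\<epsilon> > 0\<close>]] by blast
  then obtain J where J: "\<And>e q. e \<in> E \<Longrightarrow> q \<in> with_ends (e (J e)) \<Longrightarrow> \<bar>f q - f (Inr e)\<bar> < \<epsilon> / 2"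
    by metis
  obtain Es N where Es: "finite Es" "Es \<subseteq> E" "\<And>x. x \<notin> K N \<Longrightarrow> \<exists>e\<in>Es. x \<in> e (J e)"
    by (rule ends_cover_Compl_K[of J]) (rule that)
  have "\<exists>L. bounded L \<and> (\<forall>x. x \<notin> L \<longrightarrow> (\<exists>C\<in>components (- K (J e)). ball x r \<subseteq> C))" for e
    using balls[rule_format, OF \<open>r > 0\<close> bounded_K[of "J e"]] by blast
  then obtain L where L: "\<And>e. bounded (L e)"
    "\<And>e x. x \<notin> L e \<Longrightarrow> \<exists>C\<in>components (- K (J e)). ball x r \<subseteq> C"
    by metis
  have "\<bar>(f \<circ> Inl) x - (f \<circ> Inl) y\<bar> < \<epsilon>"
    if "x \<notin> K N \<union> (\<Union>e\<in>Es. L e)" "y \<notin> K N \<union> (\<Union>e\<in>Es. L e)" "dist x y < r" for x y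
  proof -
    have "x \<notin> K N"
      using that(1) by blast
    then obtain e where "e \<in> Es" "x \<in> e (J e)"
      using Es(3) by blast
    moreover have "x \<notin> L e"
      using that(1) \<open>e \<in> Es\<close> by blast
    then obtain C where "C \<in> components (- K (J e))" "ball x r \<subseteq> C"
      using L(2) by blast
    moreover have "e \<in> E"
      using \<open>e \<in> Es\<close> Es(2) by blast
    ultimately have "C = e (J e)"
      using components_eq[OF _ end_in_components] \<open>r > 0\<close>
      by (metis centre_in_ball disjoint_iff subsetD)
    then have "y \<in> e (J e)"
      using \<open>ball x r \<subseteq> C\<close> that(3) by auto
    then have "\<bar>f (Inl x) - f (Inr e)\<bar> < \<epsilon> / 2" "\<bar>f (Inl y) - f (Inr e)\<bar> < \<epsilon> / 2"
      using J[OF \<open>e \<in> E\<close>] \<open>x \<in> e (J e)\<close> by auto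
    then show ?thesis
      unfolding comp_apply abs_less_iff by linarith
  qed
  moreover have "bounded (K N \<union> (\<Union>e\<in>Es. L e))"
    using Es(1) L(1) bounded_K by auto
  ultimately show "\<exists>K'. bounded K' \<and> (\<forall>x y. x \<notin> K' \<longrightarrow> y \<notin> K' \<longrightarrow> dist x y < r \<longrightarrow>
      \<bar>(f \<circ> Inl) x - (f \<circ> Inl) y\<bar> < \<epsilon>)"
    by blast
qed

lemma balls_in_components_imp_coarse_compactification:
  assumes "\<forall>m>0. \<forall>B :: 'a set. bounded B \<longrightarrow>
            (\<exists>L. bounded L \<and> B \<subseteq> L \<and> (\<forall>x. x \<notin> L \<longrightarrow> (\<exists>C\<in>components (- B). ball x m \<subseteq> C)))"
  shows "coarse_compactification T Inl"
  unfolding coarse_compactification_def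
  using compactification_freudenthal balls_in_components_imp_slowly_oscillating[OF assms] by blast

end

theorem theorem2p2:
  fixes K :: "nat \<Rightarrow> 'a::metric_space set"
  assumes "proper_metric TYPE('a)"
    and "connected (UNIV :: 'a set)"
    and "locally_connected_space (euclidean :: 'a topology)"
    and "exhaustion K"
  shows "coarse_compactification (freudenthal K) Inl \<longleftrightarrow>
         (\<forall>m>0. \<forall>B :: 'a set. bounded B \<longrightarrow>
            (\<exists>L. bounded L \<and> B \<subseteq> L \<and>
               (\<forall>x. x \<notin> L \<longrightarrow> (\<exists>C\<in>components (- B). ball x m \<subseteq> C))))"
proof -
  interpret proper_exhaustion K
    using assms by unfold_locales
  show ?thesis
    by (rule iffI[OF coarse_compactification_imp_balls_in_components
          balls_in_components_imp_coarse_compactification])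
qed

end
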